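(* Let $\underline{q}_g\le\bar{q}_g$ and $\underline{v}\le\bar{v}$ be real constants and let $v_0\in[\underline{v},\bar{v}]$. Define the set \[ S:=\{(q,v):\underline{q}_g\le q\le\bar{q}_g,\ v=v_0\}\cup\{(q,v):q=\bar{q}_g,\ \underline{v}\le v\le v_0\}\cup\{(q,v):q=\underline{q}_g,\ v_0\le v\le\bar{v}\}\subseteq\mathbb{R}^2, \] and, for $\epsilon>0$, let $S^\epsilon$ be the set of all $(q,v)\in\mathbb{R}^2$ for which there exist $v^+,v^-\in[0,\bar{v}-\underline{v}]$ such that \begin{align*} &v=v_0+v^+-v^-,\\ &v^+-\epsilon\ln\left[1+\exp\left(\frac{v^+-q+\underline{q}_g}{\epsilon}\right)\right]\le\epsilon\ln 2,\\ &v^--\epsilon\ln\left[1+\exp\left(\frac{v^-+q-\bar{q}_g}{\epsilon}\right)\right]\le\epsilon\ln 2,\\ &\underline{q}_g\le q\le\bar{q}_g,\quad \underline{v}\le v\le\bar{v}. \end{align*} Then for every $\epsilon>0$ we have $S\subseteq S^\epsilon$, and \[ \sup_{(q,v)\in S^\epsilon}\ \inf_{(q',v')\in S}\|(q,v)-(q',v')\|\to 0\quad\text{as }\epsilon\to 0. \]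
   Context: In the application, $q$ is the reactive power output of a generator in a contingency, $v$ the voltage magnitude at its bus in the contingency, $v_0$ the base-case voltage magnitude at that bus, $[\underline{q}_g,\bar{q}_g]$ the reactive power bounds and $[\underline{v},\bar{v}]$ the voltage bounds. The set $S$ models the disjunctive voltage/reactive-power response and $S^\epsilon$ is its smooth relaxation. *)

theory Defs
  imports "HOL-Analysis.Analysis"
begin

text \<open>Points (q,v) of the plane are modelled as real \<times> real, whose norm is the Euclidean one.\<close>

definition S_set :: "real \<Rightarrow> real \<Rightarrow> real \<Rightarrow> real \<Rightarrow> real \<Rightarrow> (real \<times> real) set" where
  "S_set qlo qhi vlo vhi v0 =
     {(q, v). qlo \<le> q \<and> q \<le> qhi \<and> v = v0}
   \<union> {(q, v). q = qhi \<and> vlo \<le> v \<and> v \<le> v0}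
   \<union> {(q, v). q = qlo \<and> v0 \<le> v \<and> v \<le> vhi}"

definition S_eps :: "real \<Rightarrow> real \<Rightarrow> real \<Rightarrow> real \<Rightarrow> real \<Rightarrow> real \<Rightarrow> (real \<times> real) set" where
  "S_eps qlo qhi vlo vhi v0 \<epsilon> =
     {(q, v). \<exists>vp vm. 0 \<le> vp \<and> vp \<le> vhi - vlo \<and> 0 \<le> vm \<and> vm \<le> vhi - vlo \<and>
        v = v0 + vp - vm \<and>
        vp - \<epsilon> * ln (1 + exp ((vp - q + qlo) / \<epsilon>)) \<le> \<epsilon> * ln 2 \<and>
        vm - \<epsilon> * ln (1 + exp ((vm + q - qhi) / \<epsilon>)) \<le> \<epsilon> * ln 2 \<and>
        qlo \<le> q \<and> q \<le> qhi \<and> vlo \<le> v \<and> v \<le> vhi}"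

end

theory Submission
  imports Defs
begin

text \<open>The expression x - \<epsilon> ln(1 + exp((x - a)/\<epsilon>)) = -\<epsilon> ln(exp(-x/\<epsilon>) + exp(-a/\<epsilon>)) is the
  log-sum-exp smoothing of min x a and lies between min x a - \<epsilon> ln 2 and min x a.
  Hence the two smoothed constraints of S_eps hold on S, where min(vp, q - qlo) and
  min(vm, qhi - q) vanish, and conversely they force both minima below 2\<epsilon> ln 2.
  A point of S_eps with v \<ge> v0 is then within 2\<epsilon> ln 2 of S, horizontally of the branch
  q = qlo if q - qlo is small and otherwise vertically of the branch v = v0, since
  0 \<le> v - v0 \<le> vp; symmetrically for v \<le> v0.\<close>

lemma max_0_le_softplus:
  fixes \<epsilon> t :: real
  assumes "\<epsilon> > 0"
  shows "max 0 t \<le> \<epsilon> * ln (1 + exp (t / \<epsilon>))"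
proof -
  have "ln (exp (t / \<epsilon>)) \<le> ln (1 + exp (t / \<epsilon>))" by (rule ln_mono) simp_all
  then have "t \<le> \<epsilon> * ln (1 + exp (t / \<epsilon>))"
    using assms by (simp add: divide_le_eq mult.commute)
  moreover have "0 \<le> \<epsilon> * ln (1 + exp (t / \<epsilon>))" using assms by simp
  ultimately show ?thesis by simp
qed

lemma softplus_le_max_0:
  fixes \<epsilon> t :: real
  assumes "\<epsilon> > 0"
  shows "\<epsilon> * ln (1 + exp (t / \<epsilon>)) \<le> max 0 t + \<epsilon> * ln 2"
proof -
  define m where "m = max 0 (t / \<epsilon>)"
  have "1 + exp (t / \<epsilon>) \<le> 2 * exp m"
    unfolding m_def by (smt (verit) one_le_exp_iff exp_le_cancel_iff max.cobounded1 max.cobounded2)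
  then have "ln (1 + exp (t / \<epsilon>)) \<le> ln (2 * exp m)"
    by (simp add: add_pos_pos)
  also have "\<dots> = ln 2 + m" by (simp add: ln_mult)
  finally have "\<epsilon> * ln (1 + exp (t / \<epsilon>)) \<le> \<epsilon> * (ln 2 + m)"
    using assms by (simp add: mult_left_mono)
  also have "\<dots> = max 0 t + \<epsilon> * ln 2"
    unfolding m_def using assms by (simp add: max_def field_simps)
  finally show ?thesis .
qed

lemma smoothed_min_le_min:
  fixes \<epsilon> x a :: real
  assumes "\<epsilon> > 0"
  shows "x - \<epsilon> * ln (1 + exp ((x - a) / \<epsilon>)) \<le> min x a"
  using max_0_le_softplus[OF assms, of "x - a"] assms by (simp add: min_def max_def split: if_splits)

lemma min_le_smoothed_min:
  fixes \<epsilon> x a :: real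
  assumes "\<epsilon> > 0"
  shows "min x a - \<epsilon> * ln 2 \<le> x - \<epsilon> * ln (1 + exp ((x - a) / \<epsilon>))"
  using softplus_le_max_0[OF assms, of "x - a"] by (simp add: min_def max_def split: if_splits)

lemma S_eps_memI:
  fixes qlo qhi vlo vhi v0 \<epsilon> q v vp vm :: real
  assumes "\<epsilon> > 0" and "qlo \<le> q" "q \<le> qhi" and "vlo \<le> v" "v \<le> vhi"
    and "0 \<le> vp" "vp \<le> vhi - vlo" "0 \<le> vm" "vm \<le> vhi - vlo" and "v = v0 + vp - vm"
    and "min vp (q - qlo) \<le> 0" "min vm (qhi - q) \<le> 0"
  shows "(q, v) \<in> S_eps qlo qhi vlo vhi v0 \<epsilon>"
proof -
  have shifts: "vp - q + qlo = vp - (q - qlo)" "vm + q - qhi = vm - (qhi - q)" by simp_all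
  have "0 \<le> \<epsilon> * ln 2" using assms(1) by simp
  then have "vp - \<epsilon> * ln (1 + exp ((vp - q + qlo) / \<epsilon>)) \<le> \<epsilon> * ln 2"
    and "vm - \<epsilon> * ln (1 + exp ((vm + q - qhi) / \<epsilon>)) \<le> \<epsilon> * ln 2"
    unfolding shifts using smoothed_min_le_min[OF assms(1), of vp "q - qlo"]
      smoothed_min_le_min[OF assms(1), of vm "qhi - q"] assms(11,12)
    by linarith+
  then show ?thesis
    unfolding S_eps_def using assms(2-10) by blast
qed

lemma S_eps_memE:
  fixes qlo qhi vlo vhi v0 \<epsilon> q v :: real
  assumes "\<epsilon> > 0" and "(q, v) \<in> S_eps qlo qhi vlo vhi v0 \<epsilon>"
  obtains vp vm where "qlo \<le> q" "q \<le> qhi" "vlo \<le> v" "v \<le> vhi"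
    and "0 \<le> vp" "0 \<le> vm" "v = v0 + vp - vm"
    and "min vp (q - qlo) \<le> 2 * \<epsilon> * ln 2" "min vm (qhi - q) \<le> 2 * \<epsilon> * ln 2"
proof -
  have shifts: "\<And>x. x - q + qlo = x - (q - qlo)" "\<And>x. x + q - qhi = x - (qhi - q)"
    by simp_all
  obtain vp vm where "0 \<le> vp" "0 \<le> vm" "v = v0 + vp - vm"
    and vp: "vp - \<epsilon> * ln (1 + exp ((vp - q + qlo) / \<epsilon>)) \<le> \<epsilon> * ln 2"
    and vm: "vm - \<epsilon> * ln (1 + exp ((vm + q - qhi) / \<epsilon>)) \<le> \<epsilon> * ln 2"
    and "qlo \<le> q" "q \<le> qhi" "vlo \<le> v" "v \<le> vhi"
    using assms(2) unfolding S_eps_def by blast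
  moreover have "min vp (q - qlo) \<le> 2 * \<epsilon> * ln 2" "min vm (qhi - q) \<le> 2 * \<epsilon> * ln 2"
    using min_le_smoothed_min[OF assms(1), of vp "q - qlo"]
      min_le_smoothed_min[OF assms(1), of vm "qhi - q"] vp vm
    unfolding shifts by linarith+
  ultimately show ?thesis using that by blast
qed

lemma infdist_S_set_le:
  fixes qlo qhi vlo vhi v0 q v vp vm d :: real
  assumes "qlo \<le> q" "q \<le> qhi" "vlo \<le> v" "v \<le> vhi"
    and "0 \<le> vp" "0 \<le> vm" "v = v0 + vp - vm"
    and "min vp (q - qlo) \<le> d" "min vm (qhi - q) \<le> d"
  shows "infdist (q, v) (S_set qlo qhi vlo vhi v0) \<le> d"
proof -
  have on_flat: "(q, v0) \<in> S_set qlo qhi vlo vhi v0"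
    using assms(1,2) unfolding S_set_def by blast
  show ?thesis
  proof (cases "v0 \<le> v")
    case True
    show ?thesis
    proof (cases "q - qlo \<le> d")
      case True
      have "(qlo, v) \<in> S_set qlo qhi vlo vhi v0"
        using \<open>v0 \<le> v\<close> assms(4) unfolding S_set_def by blast
      then show ?thesis
        by (rule infdist_le2) (use True assms(1) in \<open>simp add: dist_Pair_Pair dist_real_def\<close>)
    next
      case False
      then have "v - v0 \<le> d" using assms(6-8) by linarith
      with \<open>v0 \<le> v\<close> have "dist (q, v) (q, v0) \<le> d"
        by (simp add: dist_Pair_Pair dist_real_def)
      with on_flat show ?thesis by (rule infdist_le2)
    qed
  next
    case False
    show ?thesis
    proof (cases "qhi - q \<le> d")
      case True
      have "(qhi, v) \<in> S_set qlo qhi vlo vhi v0"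
        using \<open>\<not> v0 \<le> v\<close> assms(3) unfolding S_set_def by auto
      then show ?thesis
        by (rule infdist_le2) (use True assms(2) in \<open>simp add: dist_Pair_Pair dist_real_def\<close>)
    next
      case False
      then have "v0 - v \<le> d" using assms(5,7,9) by linarith
      with \<open>\<not> v0 \<le> v\<close> have "dist (q, v) (q, v0) \<le> d"
        by (simp add: dist_Pair_Pair dist_real_def)
      with on_flat show ?thesis by (rule infdist_le2)
    qed
  qed
qed

lemma S_set_subset_S_eps:
  fixes qlo qhi vlo vhi v0 \<epsilon> :: real
  assumes "qlo \<le> qhi" "vlo \<le> v0" "v0 \<le> vhi" "\<epsilon> > 0"
  shows "S_set qlo qhi vlo vhi v0 \<subseteq> S_eps qlo qhi vlo vhi v0 \<epsilon>"
proof
  fix p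
  assume "p \<in> S_set qlo qhi vlo vhi v0"
  then consider (flat) q where "p = (q, v0)" "qlo \<le> q" "q \<le> qhi"
    | (upper) v where "p = (qhi, v)" "vlo \<le> v" "v \<le> v0"
    | (lower) v where "p = (qlo, v)" "v0 \<le> v" "v \<le> vhi"
    unfolding S_set_def by blast
  then show "p \<in> S_eps qlo qhi vlo vhi v0 \<epsilon>"
  proof cases
    case flat
    show ?thesis
      unfolding flat(1) by (intro S_eps_memI[where vp = 0 and vm = 0])
        (use assms flat in auto)
  next
    case upper
    show ?thesis
      unfolding upper(1) by (intro S_eps_memI[where vp = 0 and vm = "v0 - v"])
        (use assms upper in auto)
  next
    case lower
    show ?thesis
      unfolding lower(1) by (intro S_eps_memI[where vp = "v - v0" and vm = 0])
        (use assms lower in auto)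
  qed
qed

lemma infdist_S_eps_le:
  fixes qlo qhi vlo vhi v0 \<epsilon> :: real
  assumes "\<epsilon> > 0" and "p \<in> S_eps qlo qhi vlo vhi v0 \<epsilon>"
  shows "infdist p (S_set qlo qhi vlo vhi v0) \<le> 2 * \<epsilon> * ln 2"
proof (cases p)
  case (Pair q v)
  with assms show ?thesis
    by (auto elim: S_eps_memE intro: infdist_S_set_le)
qed

lemma abs_SUP_infdist_S_eps_le:
  fixes qlo qhi vlo vhi v0 \<epsilon> :: real
  assumes "qlo \<le> qhi" "vlo \<le> v0" "v0 \<le> vhi" "\<epsilon> > 0"
  shows "\<bar>SUP p\<in>S_eps qlo qhi vlo vhi v0 \<epsilon>. infdist p (S_set qlo qhi vlo vhi v0)\<bar>
    \<le> 2 * \<epsilon> * ln 2" (is "\<bar>?excess\<bar> \<le> _")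
proof -
  have "(qlo, v0) \<in> S_eps qlo qhi vlo vhi v0 \<epsilon>"
    using S_set_subset_S_eps[OF assms] assms(1) unfolding S_set_def by blast
  moreover have bound: "\<And>p. p \<in> S_eps qlo qhi vlo vhi v0 \<epsilon> \<Longrightarrow>
      infdist p (S_set qlo qhi vlo vhi v0) \<le> 2 * \<epsilon> * ln 2"
    using infdist_S_eps_le[OF assms(4)] .
  ultimately have "0 \<le> ?excess"
    by (intro cSUP_upper2[OF bdd_aboveI2] infdist_nonneg) (use bound in blast)+
  moreover have "?excess \<le> 2 * \<epsilon> * ln 2"
    using bound \<open>(qlo, v0) \<in> S_eps qlo qhi vlo vhi v0 \<epsilon>\<close> by (intro cSUP_least) auto
  ultimately show ?thesis by simp
qed

theorem proposition2:
  fixes qlo qhi vlo vhi v0 :: real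
  assumes "qlo \<le> qhi" and "vlo \<le> vhi" and "vlo \<le> v0" and "v0 \<le> vhi"
  shows "(\<forall>\<epsilon>>0. S_set qlo qhi vlo vhi v0 \<subseteq> S_eps qlo qhi vlo vhi v0 \<epsilon>) \<and>
         ((\<lambda>\<epsilon>. SUP p\<in>S_eps qlo qhi vlo vhi v0 \<epsilon>. infdist p (S_set qlo qhi vlo vhi v0))
            \<longlongrightarrow> 0) (at_right 0)"
proof
  show "\<forall>\<epsilon>>0. S_set qlo qhi vlo vhi v0 \<subseteq> S_eps qlo qhi vlo vhi v0 \<epsilon>"
    using S_set_subset_S_eps[OF assms(1,3,4)] by blast
  let ?excess = "\<lambda>\<epsilon>. SUP p\<in>S_eps qlo qhi vlo vhi v0 \<epsilon>. infdist p (S_set qlo qhi vlo vhi v0)"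
  have "\<forall>\<^sub>F \<epsilon> in at_right 0. norm (?excess \<epsilon>) \<le> 2 * \<epsilon> * ln 2"
    using eventually_at_right_less[of 0]
    by (rule eventually_mono) (use abs_SUP_infdist_S_eps_le[OF assms(1,3,4)] in simp)
  moreover have "((\<lambda>\<epsilon>. 2 * \<epsilon> * ln 2) \<longlongrightarrow> 0) (at_right (0::real))"
    by (auto intro!: tendsto_eq_intros)
  ultimately show "(?excess \<longlongrightarrow> 0) (at_right 0)"
    by (rule Lim_null_comparison)
qed

end
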